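(* Let $\mathscr{A}$ be a $C^*$-algebra, let $\delta,\varepsilon\in(0,1)$, let $\mathscr{E}$ and $\mathscr{F}$ be inner product $\mathscr{A}$-modules, and let $T:\mathscr{E}\to\mathscr{F}$ be a nonzero linear mapping such that for some real number $\gamma$ with $[T]\leq\gamma\leq\|T\|$, $$\sqrt{\tfrac{\delta}{\varepsilon}}\,\gamma^2\|\langle x,y\rangle\|\leq\|\langle Tx,Ty\rangle\|\leq\sqrt{\tfrac{\varepsilon}{\delta}}\,\gamma^2\|\langle x,y\rangle\|\qquad(x,y\in\mathscr{E}).$$ Then $T$ is a $(\delta,\varepsilon)$-orthogonality preserving mapping.
   Context: An inner product $\mathscr{A}$-module is a right $\mathscr{A}$-module $\mathscr{E}$ with an $\mathscr{A}$-valued inner product $\langle\cdot,\cdot\rangle$, $\mathbb{C}$-linear and $\mathscr{A}$-linear in the second variable, with $\langle x,y\rangle^*=\langle y,x\rangle$, $\langle x,x\rangle\geq0$ and $\langle x,x\rangle=0$ iff $x=0$; the norm is $\|x\|=\|\langle x,x\rangle\|^{1/2}$. The minimum modulus of a linear map $T$ is $[T]=\inf\{\|Tx\|:\|x\|=1\}$. A mapping $T:\mathscr{E}\to\mathscr{F}$ is $(\delta,\varepsilon)$-orthogonality preserving if for all $x,y\in\mathscr{E}$, $\|\langle x,y\rangle\|\leq\delta\|x\|\,\|y\|$ implies $\|\langle Tx,Ty\rangle\|\leq\varepsilon\|Tx\|\,\|Ty\|$. *)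

theory Defs
  imports "HOL-Analysis.Analysis"
begin

class cplx_vector = real_vector +
  fixes scaleC :: "complex \<Rightarrow> 'a \<Rightarrow> 'a" (infixr \<open>*\<^sub>C\<close> 75)
  assumes scaleC_add_right: "c *\<^sub>C (x + y) = c *\<^sub>C x + c *\<^sub>C y"
    and scaleC_add_left: "(c + d) *\<^sub>C x = c *\<^sub>C x + d *\<^sub>C x"
    and scaleC_scaleC: "c *\<^sub>C (d *\<^sub>C x) = (c * d) *\<^sub>C x"
    and scaleC_one: "(1::complex) *\<^sub>C x = x"
    and scaleR_scaleC: "scaleR r x = (complex_of_real r) *\<^sub>C x"

class cplx_normed_algebra = cplx_vector + real_normed_algebra +
  assumes norm_scaleC: "norm (c *\<^sub>C x) = cmod c * norm x"
    and mult_scaleC_left: "(c *\<^sub>C x) * y = c *\<^sub>C (x * y)"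
    and mult_scaleC_right: "x * (c *\<^sub>C y) = c *\<^sub>C (x * y)"

definition cstar_algebra :: "('a::{cplx_normed_algebra, banach} \<Rightarrow> 'a) \<Rightarrow> bool" where
  "cstar_algebra invl \<longleftrightarrow>
     (\<forall>a b. invl (a + b) = invl a + invl b) \<and>
     (\<forall>c a. invl (c *\<^sub>C a) = cnj c *\<^sub>C invl a) \<and>
     (\<forall>a b. invl (a * b) = invl b * invl a) \<and>
     (\<forall>a. invl (invl a) = a) \<and>
     (\<forall>a. norm (invl a * a) = (norm a)\<^sup>2)"

definition cstar_positive :: "('a::{cplx_normed_algebra, banach} \<Rightarrow> 'a) \<Rightarrow> 'a \<Rightarrow> bool" where
  "cstar_positive invl a \<longleftrightarrow> (\<exists>b. a = invl b * b)"

definition inner_product_module ::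
  "('a::{cplx_normed_algebra, banach} \<Rightarrow> 'a) \<Rightarrow> ('e::cplx_vector \<Rightarrow> 'a \<Rightarrow> 'e) \<Rightarrow> ('e \<Rightarrow> 'e \<Rightarrow> 'a) \<Rightarrow> bool" where
  "inner_product_module invl act ip \<longleftrightarrow>
     \<comment> \<open>right module axioms\<close>
     (\<forall>x y a. act (x + y) a = act x a + act y a) \<and>
     (\<forall>x a b. act x (a + b) = act x a + act x b) \<and>
     (\<forall>x a b. act x (a * b) = act (act x a) b) \<and>
     (\<forall>c x a. act (c *\<^sub>C x) a = c *\<^sub>C act x a \<and> act x (c *\<^sub>C a) = c *\<^sub>C act x a) \<and>
     \<comment> \<open>inner product axioms\<close>
     (\<forall>x y z. ip x (y + z) = ip x y + ip x z) \<and>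
     (\<forall>x y c. ip x (c *\<^sub>C y) = c *\<^sub>C ip x y) \<and>
     (\<forall>x y a. ip x (act y a) = ip x y * a) \<and>
     (\<forall>x y. invl (ip x y) = ip y x) \<and>
     (\<forall>x. cstar_positive invl (ip x x)) \<and>
     (\<forall>x. ip x x = 0 \<longleftrightarrow> x = 0)"

definition ip_norm :: "('e \<Rightarrow> 'e \<Rightarrow> 'a::real_normed_vector) \<Rightarrow> 'e \<Rightarrow> real" where
  "ip_norm ip x = sqrt (norm (ip x x))"

definition cplx_linear :: "('e::cplx_vector \<Rightarrow> 'f::cplx_vector) \<Rightarrow> bool" where
  "cplx_linear T \<longleftrightarrow> (\<forall>x y. T (x + y) = T x + T y) \<and> (\<forall>c x. T (c *\<^sub>C x) = c *\<^sub>C T x)"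

text \<open>Operator norm (possibly infinite, hence extended real).\<close>
definition op_norm :: "('e \<Rightarrow> 'e \<Rightarrow> 'a::real_normed_vector) \<Rightarrow> ('f \<Rightarrow> 'f \<Rightarrow> 'b::real_normed_vector)
    \<Rightarrow> ('e \<Rightarrow> 'f) \<Rightarrow> ereal" where
  "op_norm ipE ipF T = (SUP x\<in>{x. ip_norm ipE x \<le> 1}. ereal (ip_norm ipF (T x)))"

definition min_modulus :: "('e \<Rightarrow> 'e \<Rightarrow> 'a::real_normed_vector) \<Rightarrow> ('f \<Rightarrow> 'f \<Rightarrow> 'b::real_normed_vector)
    \<Rightarrow> ('e \<Rightarrow> 'f) \<Rightarrow> ereal" where
  "min_modulus ipE ipF T = (INF x\<in>{x. ip_norm ipE x = 1}. ereal (ip_norm ipF (T x)))"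

definition orth_preserving ::
  "real \<Rightarrow> real \<Rightarrow> ('e \<Rightarrow> 'e \<Rightarrow> 'a::real_normed_vector) \<Rightarrow> ('f \<Rightarrow> 'f \<Rightarrow> 'a) \<Rightarrow> ('e \<Rightarrow> 'f) \<Rightarrow> bool" where
  "orth_preserving \<delta> \<epsilon> ipE ipF T \<longleftrightarrow>
     (\<forall>x y. norm (ipE x y) \<le> \<delta> * ip_norm ipE x * ip_norm ipE y \<longrightarrow>
            norm (ipF (T x) (T y)) \<le> \<epsilon> * ip_norm ipF (T x) * ip_norm ipF (T y))"

end

theory Submission
  imports Defs
begin

text \<open>If \<open>c \<parallel>\<langle>x,x\<rangle>\<parallel> \<le> \<parallel>\<langle>Tx,Tx\<rangle>\<parallel>\<close> and \<open>\<parallel>\<langle>Tx,Ty\<rangle>\<parallel> \<le> d \<parallel>\<langle>x,y\<rangle>\<parallel>\<close>, then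
  \<open>\<parallel>\<langle>Tx,Ty\<rangle>\<parallel> \<le> d \<delta> \<parallel>x\<parallel> \<parallel>y\<parallel> \<le> \<epsilon> c \<parallel>x\<parallel> \<parallel>y\<parallel> \<le> \<epsilon> \<parallel>Tx\<parallel> \<parallel>Ty\<parallel>\<close> as soon as
  \<open>\<delta> d \<le> \<epsilon> c\<close>. The corollary's constants \<open>\<surd>(\<delta>/\<epsilon>) \<gamma>\<^sup>2\<close> and \<open>\<surd>(\<epsilon>/\<delta>) \<gamma>\<^sup>2\<close> satisfy
  this with equality.\<close>

lemma ip_norm_nonneg: "0 \<le> ip_norm ip x"
  by (simp add: ip_norm_def)

lemma ip_norm_lower_bound:
  assumes "0 \<le> c" and "c * norm (ipE x x) \<le> norm (ipF u u)"
  shows "sqrt c * ip_norm ipE x \<le> ip_norm ipF u"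
proof -
  have "sqrt (c * norm (ipE x x)) \<le> sqrt (norm (ipF u u))"
    using assms(2) by (rule real_sqrt_le_mono)
  then show ?thesis
    by (simp add: ip_norm_def real_sqrt_mult)
qed

lemma orth_preserving_if_ip_bounds:
  fixes ipE :: "'e \<Rightarrow> 'e \<Rightarrow> 'a::real_normed_vector" and ipF :: "'f \<Rightarrow> 'f \<Rightarrow> 'a"
  assumes "0 \<le> c" "0 \<le> d" "0 \<le> \<epsilon>" and ratio: "\<delta> * d \<le> \<epsilon> * c"
    and lower: "\<And>x. c * norm (ipE x x) \<le> norm (ipF (T x) (T x))"
    and upper: "\<And>x y. norm (ipF (T x) (T y)) \<le> d * norm (ipE x y)"
  shows "orth_preserving \<delta> \<epsilon> ipE ipF T"
  unfolding orth_preserving_def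
proof (intro allI impI)
  fix x y
  assume small: "norm (ipE x y) \<le> \<delta> * ip_norm ipE x * ip_norm ipE y"
  have nxy: "0 \<le> ip_norm ipE x * ip_norm ipE y"
    by (simp add: ip_norm_nonneg)
  have "norm (ipF (T x) (T y)) \<le> d * norm (ipE x y)"
    by (rule upper)
  also have "\<dots> \<le> (\<delta> * d) * (ip_norm ipE x * ip_norm ipE y)"
    using mult_left_mono[OF small \<open>0 \<le> d\<close>] by (simp add: ac_simps)
  also have "\<dots> \<le> \<epsilon> * ((sqrt c * ip_norm ipE x) * (sqrt c * ip_norm ipE y))"
  proof -
    have "(sqrt c * ip_norm ipE x) * (sqrt c * ip_norm ipE y) = c * (ip_norm ipE x * ip_norm ipE y)"
      using \<open>0 \<le> c\<close> by (simp add: mult_ac flip: real_sqrt_mult)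
    then show ?thesis
      using mult_right_mono[OF ratio nxy] by (simp only: mult.assoc)
  qed
  also have "\<dots> \<le> \<epsilon> * (ip_norm ipF (T x) * ip_norm ipF (T y))"
    using ip_norm_lower_bound[where ipE = ipE and ipF = ipF, OF \<open>0 \<le> c\<close> lower]
      \<open>0 \<le> c\<close> \<open>0 \<le> \<epsilon>\<close>
    by (intro mult_left_mono mult_mono) (simp_all add: ip_norm_nonneg)
  finally show "norm (ipF (T x) (T y)) \<le> \<epsilon> * ip_norm ipF (T x) * ip_norm ipF (T y)"
    by (simp add: mult.assoc)
qed

lemma sqrt_ratio_balance:
  fixes \<delta> \<epsilon> :: real
  assumes "0 < \<delta>" "0 < \<epsilon>"
  shows "\<delta> * sqrt (\<epsilon> / \<delta>) = \<epsilon> * sqrt (\<delta> / \<epsilon>)"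
  using assms by (simp add: real_sqrt_divide field_simps)

theorem corollary2p2:
  fixes invl :: "'a::{cplx_normed_algebra, banach} \<Rightarrow> 'a"
    and actE :: "'e::cplx_vector \<Rightarrow> 'a \<Rightarrow> 'e" and ipE :: "'e \<Rightarrow> 'e \<Rightarrow> 'a"
    and actF :: "'f::cplx_vector \<Rightarrow> 'a \<Rightarrow> 'f" and ipF :: "'f \<Rightarrow> 'f \<Rightarrow> 'a"
    and T :: "'e \<Rightarrow> 'f" and \<delta> \<epsilon> \<gamma> :: real
  assumes "cstar_algebra invl"
    and "0 < \<delta>" "\<delta> < 1" "0 < \<epsilon>" "\<epsilon> < 1"
    and "inner_product_module invl actE ipE"
    and "inner_product_module invl actF ipF"
    and "cplx_linear T" and "\<exists>x. T x \<noteq> 0"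
    and "min_modulus ipE ipF T \<le> ereal \<gamma>" and "ereal \<gamma> \<le> op_norm ipE ipF T"
    and "\<And>x y. sqrt (\<delta> / \<epsilon>) * \<gamma>\<^sup>2 * norm (ipE x y) \<le> norm (ipF (T x) (T y))"
    and "\<And>x y. norm (ipF (T x) (T y)) \<le> sqrt (\<epsilon> / \<delta>) * \<gamma>\<^sup>2 * norm (ipE x y)"
  shows "orth_preserving \<delta> \<epsilon> ipE ipF T"
proof (rule orth_preserving_if_ip_bounds)
  show "0 \<le> sqrt (\<delta> / \<epsilon>) * \<gamma>\<^sup>2" "0 \<le> sqrt (\<epsilon> / \<delta>) * \<gamma>\<^sup>2"
    using \<open>0 < \<delta>\<close> \<open>0 < \<epsilon>\<close> by simp_all
  show "\<delta> * (sqrt (\<epsilon> / \<delta>) * \<gamma>\<^sup>2) \<le> \<epsilon> * (sqrt (\<delta> / \<epsilon>) * \<gamma>\<^sup>2)"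
    using sqrt_ratio_balance[OF \<open>0 < \<delta>\<close> \<open>0 < \<epsilon>\<close>] by (simp add: mult.assoc[symmetric])
qed (use assms in auto)

end
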